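(* Let $\phi$ be a cocycle with respect to $\theta$ on $\mathbb{R}^+\times\Sigma\times X$ having a bounded pullback absorbing set $\{B_\sigma\}_{\sigma\in\Sigma}$ (not necessarily nested). Assume that for every $\varepsilon>0$ and every $\sigma\in\Sigma$ there exist $T=T(\sigma,\varepsilon)\ge0$ and a function $\psi_{T,\sigma}\in\mathrm{Contr}(B_{\theta_{-T}(\sigma)})$ such that $$\|\phi(T,\theta_{-T}(\sigma);x)-\phi(T,\theta_{-T}(\sigma);y)\|\le\varepsilon+\psi_{T,\sigma}(x,y)\quad\text{for all }x,y\in B_{\theta_{-T}(\sigma)}.$$ Then $\phi$ is pullback asymptotically compact.
   Context: Let $X$ be a Banach space with norm $\|\cdot\|$. Let $\Sigma$ be a set and $\theta=\{\theta_t\}_{t\in\mathbb{R}}$ a group of bijections $\theta_t:\Sigma\to\Sigma$ with $\theta_0=\mathrm{id}$ and $\theta_{t+\tau}=\theta_t\circ\theta_\tau$. A cocycle with respect to $\theta$ is a map $\phi:\mathbb{R}^+\times\Sigma\times X\to X$ with $\phi(0,\sigma;x)=x$ and $\phi(s+t,\sigma;x)=\phi(s,\theta_t(\sigma);\phi(t,\sigma;x))$ for all $s,t\ge 0$. For $B\subset X$, $\phi(t,\sigma;B)=\{\phi(t,\sigma;x):x\in B\}$. A bounded pullback absorbing set is a family $\{B_\sigma\}_{\sigma\in\Sigma}$ of bounded subsets of $X$ such that for every $\sigma$ and bounded $B\subset X$ there is $T\ge0$ with $\phi(t,\theta_{-t}(\sigma);B)\subset B_\sigma$ for all $t\ge T$.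 For a bounded set $B\subset X$, $\mathrm{Contr}(B)$ denotes the set of functions $\psi:X\times X\to\mathbb{R}$ such that every sequence $\{x_n\}\subset B$ has a subsequence $\{x_{n_k}\}$ with $\lim_{k\to\infty}\lim_{l\to\infty}\psi(x_{n_k},x_{n_l})=0$. $\phi$ is pullback asymptotically compact if for each $\sigma\in\Sigma$, every bounded sequence $\{x_n\}\subset X$ and every $\{t_n\}\subset\mathbb{R}^+$ with $t_n\to+\infty$, the sequence $\{\phi(t_n,\theta_{-t_n}(\sigma);x_n)\}$ is precompact in $X$. *)

theory Defs
  imports "HOL-Analysis.Analysis"
begin

definition is_group_of_bijections :: "(real \<Rightarrow> 's \<Rightarrow> 's) \<Rightarrow> bool" where
  "is_group_of_bijections \<theta> \<longleftrightarrow>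
     (\<forall>t. bij (\<theta> t)) \<and> \<theta> 0 = id \<and> (\<forall>t \<tau>. \<theta> (t + \<tau>) = \<theta> t \<circ> \<theta> \<tau>)"

text \<open>Only the values of phi at nonnegative times are relevant.\<close>
definition is_cocycle :: "(real \<Rightarrow> 's \<Rightarrow> 's) \<Rightarrow> (real \<Rightarrow> 's \<Rightarrow> 'x \<Rightarrow> 'x) \<Rightarrow> bool" where
  "is_cocycle \<theta> \<phi> \<longleftrightarrow>
     (\<forall>\<sigma> x. \<phi> 0 \<sigma> x = x) \<and>
     (\<forall>s t \<sigma> x. s \<ge> 0 \<longrightarrow> t \<ge> 0 \<longrightarrow> \<phi> (s + t) \<sigma> x = \<phi> s (\<theta> t \<sigma>) (\<phi> t \<sigma> x))"

definition bounded_pullback_absorbing ::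
  "(real \<Rightarrow> 's \<Rightarrow> 's) \<Rightarrow> (real \<Rightarrow> 's \<Rightarrow> 'x::real_normed_vector \<Rightarrow> 'x) \<Rightarrow> ('s \<Rightarrow> 'x set) \<Rightarrow> bool" where
  "bounded_pullback_absorbing \<theta> \<phi> B \<longleftrightarrow>
     (\<forall>\<sigma>. bounded (B \<sigma>)) \<and>
     (\<forall>\<sigma> D. bounded D \<longrightarrow>
        (\<exists>T\<ge>0. \<forall>t\<ge>T. \<phi> t (\<theta> (-t) \<sigma>) ` D \<subseteq> B \<sigma>))"

definition Contr :: "'x set \<Rightarrow> ('x \<Rightarrow> 'x \<Rightarrow> real) set" where
  "Contr B = {\<psi>. \<forall>x::nat \<Rightarrow> 'x. (\<forall>n. x n \<in> B) \<longrightarrow>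
      (\<exists>r. strict_mono r \<and>
         (\<exists>L. (\<forall>k. (\<lambda>l. \<psi> (x (r k)) (x (r l))) \<longlonglongrightarrow> L k) \<and> L \<longlonglongrightarrow> 0))}"

definition pullback_asymptotically_compact ::
  "(real \<Rightarrow> 's \<Rightarrow> 's) \<Rightarrow> (real \<Rightarrow> 's \<Rightarrow> 'x::real_normed_vector \<Rightarrow> 'x) \<Rightarrow> bool" where
  "pullback_asymptotically_compact \<theta> \<phi> \<longleftrightarrow>
     (\<forall>\<sigma> (x::nat \<Rightarrow> 'x) (t::nat \<Rightarrow> real).
        bounded (range x) \<longrightarrow> (\<forall>n. t n \<ge> 0) \<longrightarrow> filterlim t at_top sequentially \<longrightarrow>
        compact (closure (range (\<lambda>n. \<phi> (t n) (\<theta> (- t n) \<sigma>) (x n)))))"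

end

theory Submission
  imports Defs
begin

(* Fix \<sigma>, a bounded sequence x and times t n \<rightarrow> \<infinity>, and let \<epsilon> > 0 with its T and \<psi>.
   By the cocycle property and absorption, for all large n the point
   \<phi> (t n) (\<theta> (- t n) \<sigma>) (x n) is the image under \<phi> T (\<theta> (-T) \<sigma>) of a point z n
   of B (\<theta> (-T) \<sigma>).  Since \<psi> is contractive there, any infinite family of the z n
   contains a pair with \<psi> < \<epsilon>, so the corresponding orbit points are 2\<epsilon>-close.
   Hence no tail of the orbit contains an infinite 2\<epsilon>-separated family, the orbit is
   totally bounded, and its closure is compact because X is complete. *)

lemma cocycle_pullback_split:
  assumes "is_group_of_bijections \<theta>" and "is_cocycle \<theta> \<phi>" and "0 \<le> T" and "T \<le> t"
  shows "\<phi> t (\<theta> (-t) \<sigma>) x = \<phi> T (\<theta> (-T) \<sigma>) (\<phi> (t - T) (\<theta> (-(t - T)) (\<theta> (-T) \<sigma>)) x)"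
proof -
  have shift: "\<theta> a (\<theta> b s) = \<theta> (a + b) s" for a b s
    using assms(1) unfolding is_group_of_bijections_def by simp
  have "\<phi> (T + (t - T)) (\<theta> (-t) \<sigma>) x = \<phi> T (\<theta> (t - T) (\<theta> (-t) \<sigma>)) (\<phi> (t - T) (\<theta> (-t) \<sigma>) x)"
    using assms(2-4) unfolding is_cocycle_def by (meson diff_ge_0_iff_ge)
  moreover have "\<theta> (t - T) (\<theta> (-t) \<sigma>) = \<theta> (-T) \<sigma>" and "\<theta> (-(t - T)) (\<theta> (-T) \<sigma>) = \<theta> (-t) \<sigma>"
    by (simp_all add: shift)
  ultimately show ?thesis
    by simp
qed

lemma Contr_close_pair:
  fixes e :: real and z :: "nat \<Rightarrow> 'a"
  assumes "\<psi> \<in> Contr S" and "\<And>n. z n \<in> S" and "e > 0"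
  obtains i j where "i < j" and "\<psi> (z i) (z j) < e"
proof -
  obtain r L where r: "strict_mono r"
    and L: "\<And>k. (\<lambda>l. \<psi> (z (r k)) (z (r l))) \<longlonglongrightarrow> L k" and "L \<longlonglongrightarrow> 0"
    using assms(1,2) unfolding Contr_def by blast
  have "e/2 > 0"
    using \<open>e > 0\<close> by simp
  obtain k where "\<forall>k'\<ge>k. norm (L k' - 0) < e/2"
    using LIMSEQ_D[OF \<open>L \<longlonglongrightarrow> 0\<close> \<open>e/2 > 0\<close>] by blast
  then have k: "\<bar>L k\<bar> < e/2"
    by simp
  obtain M where M: "\<forall>l\<ge>M. norm (\<psi> (z (r k)) (z (r l)) - L k) < e/2"
    using LIMSEQ_D[OF L \<open>e/2 > 0\<close>] by blast
  define l where "l = max M (Suc k)"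
  have "r k < r l"
    using r unfolding l_def strict_mono_def by simp
  moreover have "\<psi> (z (r k)) (z (r l)) < e"
  proof -
    have "\<bar>\<psi> (z (r k)) (z (r l)) - L k\<bar> < e/2"
      using M unfolding l_def by simp
    then show ?thesis
      using k by linarith
  qed
  ultimately show thesis
    using that by blast
qed

lemma finite_ball_cover_if_no_separated_sequence:
  fixes S :: "'a::metric_space set"
  assumes "\<And>p :: nat \<Rightarrow> 'a. range p \<subseteq> S \<Longrightarrow> \<exists>i j. i < j \<and> dist (p i) (p j) < e"
  shows "\<exists>K. finite K \<and> K \<subseteq> S \<and> S \<subseteq> (\<Union>x\<in>K. ball x e)"
proof (rule ccontr)
  assume no_cover: "\<not> ?thesis"
  let ?Q = "\<lambda>p (n::nat) r. r \<in> S \<and> (\<forall>m<n. e \<le> dist (p m) r)"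
  have "\<exists>p. \<forall>n. ?Q p n (p n)"
  proof (rule dependent_wellorder_choice)
    fix n and p :: "nat \<Rightarrow> 'a"
    assume "\<And>m. m < n \<Longrightarrow> ?Q p m (p m)"
    then have "\<not> S \<subseteq> (\<Union>x\<in>p ` {..<n}. ball x e)"
      using no_cover by blast
    then show "\<exists>r. ?Q p n r"
      by (auto simp: not_less)
  qed simp
  then obtain p :: "nat \<Rightarrow> 'a"
    where "range p \<subseteq> S" and separated: "\<And>m n. m < n \<Longrightarrow> e \<le> dist (p m) (p n)"
    by blast
  then obtain i j where "i < j" and "dist (p i) (p j) < e"
    using assms by blast
  with separated show False
    by fastforce
qed

lemma compact_closure_if_finite_ball_covers:
  fixes S :: "'a::complete_space set"
  assumes "\<And>e. e > 0 \<Longrightarrow> \<exists>K. finite K \<and> K \<subseteq> S \<and> S \<subseteq> (\<Union>x\<in>K. ball x e)"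
  shows "compact (closure S)"
proof -
  have "Met_TC.mtotally_bounded S"
    unfolding Met_TC.mtotally_bounded_def mball_eq_ball using assms by presburger
  then show ?thesis
    using Met_TC.mtotally_bounded_eq_compact_closure_of[of S] complete_UNIV by simp
qed

definition tail_not_separated :: "(nat \<Rightarrow> 'a::metric_space) \<Rightarrow> real \<Rightarrow> bool" where
  "tail_not_separated y e \<longleftrightarrow>
     (\<exists>N. \<forall>q :: nat \<Rightarrow> nat. (\<forall>n. N \<le> q n) \<longrightarrow> (\<exists>i j. i < j \<and> dist (y (q i)) (y (q j)) < e))"

lemma compact_closure_range_if_tail_not_separated:
  fixes y :: "nat \<Rightarrow> 'a::complete_space"
  assumes "\<And>e. e > 0 \<Longrightarrow> tail_not_separated y e"
  shows "compact (closure (range y))"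
proof (rule compact_closure_if_finite_ball_covers)
  fix e :: real
  assume "e > 0"
  obtain N where N: "\<forall>q :: nat \<Rightarrow> nat. (\<forall>n. N \<le> q n) \<longrightarrow> (\<exists>i j. i < j \<and> dist (y (q i)) (y (q j)) < e)"
    using assms[OF \<open>e > 0\<close>] unfolding tail_not_separated_def ..
  have close_pair_in_tail: "\<exists>i j. i < j \<and> dist (p i) (p j) < e" if "range p \<subseteq> y ` {N..}" for p :: "nat \<Rightarrow> 'a"
  proof -
    have "\<forall>n. \<exists>m. N \<le> m \<and> p n = y m"
      using that by auto
    then obtain q where q: "\<forall>n. N \<le> q n \<and> p n = y (q n)"
      using choice[of "\<lambda>n m. N \<le> m \<and> p n = y m"] by blast
    then have "\<exists>i j. i < j \<and> dist (y (q i)) (y (q j)) < e"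
      using N by blast
    then show ?thesis
      using q by auto
  qed
  have "\<exists>K. finite K \<and> K \<subseteq> y ` {N..} \<and> y ` {N..} \<subseteq> (\<Union>x\<in>K. ball x e)"
    by (rule finite_ball_cover_if_no_separated_sequence) (rule close_pair_in_tail)
  then obtain K where K: "finite K" "K \<subseteq> y ` {N..}" "y ` {N..} \<subseteq> (\<Union>x\<in>K. ball x e)"
    by blast
  have "range y \<subseteq> (\<Union>x\<in>K \<union> y ` {..<N}. ball x e)"
  proof
    fix w
    assume "w \<in> range y"
    then obtain n where w: "w = y n"
      by blast
    show "w \<in> (\<Union>x\<in>K \<union> y ` {..<N}. ball x e)"
    proof (cases "n < N")
      case True
      then have "y n \<in> K \<union> y ` {..<N}"
        by blast
      with \<open>e > 0\<close> show ?thesis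
        unfolding w by (meson UN_iff centre_in_ball)
    next
      case False
      then have "y n \<in> y ` {N..}"
        by simp
      with K(3) show ?thesis
        unfolding w by blast
    qed
  qed
  with K show "\<exists>K. finite K \<and> K \<subseteq> range y \<and> range y \<subseteq> (\<Union>x\<in>K. ball x e)"
    by (intro exI[of _ "K \<union> y ` {..<N}"]) auto
qed

lemma eventually_pullback_in_image_of_absorbing:
  assumes "is_group_of_bijections \<theta>" and "is_cocycle \<theta> \<phi>"
    and "bounded_pullback_absorbing \<theta> \<phi> B"
    and "bounded (range x)" and "filterlim t at_top sequentially" and "0 \<le> T"
  shows "eventually (\<lambda>n. \<phi> (t n) (\<theta> (- t n) \<sigma>) (x n) \<in> \<phi> T (\<theta> (-T) \<sigma>) ` B (\<theta> (-T) \<sigma>)) sequentially"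
proof -
  obtain T0 where "0 \<le> T0" and absorb: "\<forall>s\<ge>T0. \<phi> s (\<theta> (-s) (\<theta> (-T) \<sigma>)) ` range x \<subseteq> B (\<theta> (-T) \<sigma>)"
    using assms(3,4) unfolding bounded_pullback_absorbing_def by blast
  have "eventually (\<lambda>n. T + T0 \<le> t n) sequentially"
    using assms(5) by (simp add: filterlim_at_top)
  then show ?thesis
  proof eventually_elim
    case (elim n)
    then have "T \<le> t n" and "T0 \<le> t n - T"
      using \<open>0 \<le> T0\<close> by linarith+
    then have "\<phi> (t n - T) (\<theta> (-(t n - T)) (\<theta> (-T) \<sigma>)) (x n) \<in> B (\<theta> (-T) \<sigma>)"
      using absorb by blast
    then show ?case
      unfolding cocycle_pullback_split[OF assms(1,2,6) \<open>T \<le> t n\<close>] by (rule imageI)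
  qed
qed

lemma Contr_image_tail_not_separated:
  fixes y :: "nat \<Rightarrow> 'a::metric_space"
  assumes "eventually (\<lambda>n. y n \<in> f ` S) sequentially" and "\<psi> \<in> Contr S"
    and "\<forall>a\<in>S. \<forall>b\<in>S. dist (f a) (f b) \<le> e + \<psi> a b" and "e > 0"
  shows "tail_not_separated y (2 * e)"
proof -
  obtain N where N: "\<forall>n\<ge>N. y n \<in> f ` S"
    using assms(1) unfolding eventually_sequentially by blast
  have "\<exists>i j. i < j \<and> dist (y (q i)) (y (q j)) < 2 * e" if "\<forall>n. N \<le> q n" for q :: "nat \<Rightarrow> nat"
  proof -
    have "\<forall>n. \<exists>a. a \<in> S \<and> y (q n) = f a"
      using N that by blast
    then obtain w where "\<forall>n. w n \<in> S \<and> y (q n) = f (w n)"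
      using choice[of "\<lambda>n a. a \<in> S \<and> y (q n) = f a"] by blast
    then have w: "\<And>n. w n \<in> S" and y_eq: "\<And>n. y (q n) = f (w n)"
      by simp_all
    obtain i j where "i < j" and "\<psi> (w i) (w j) < e"
      using Contr_close_pair[OF assms(2) w assms(4)] .
    moreover have "dist (y (q i)) (y (q j)) \<le> e + \<psi> (w i) (w j)"
      using assms(3) w by (simp add: y_eq)
    ultimately have "dist (y (q i)) (y (q j)) < 2 * e"
      by linarith
    with \<open>i < j\<close> show ?thesis
      by blast
  qed
  then show ?thesis
    unfolding tail_not_separated_def by blast
qed

theorem corollary4p3:
  fixes \<theta> :: "real \<Rightarrow> 's \<Rightarrow> 's"
    and \<phi> :: "real \<Rightarrow> 's \<Rightarrow> 'x::banach \<Rightarrow> 'x"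
    and B :: "'s \<Rightarrow> 'x set"
  assumes "is_group_of_bijections \<theta>"
    and "is_cocycle \<theta> \<phi>"
    and "bounded_pullback_absorbing \<theta> \<phi> B"
    and "\<forall>\<epsilon>>0. \<forall>\<sigma>. \<exists>T\<ge>0. \<exists>\<psi> \<in> Contr (B (\<theta> (-T) \<sigma>)).
           \<forall>x\<in>B (\<theta> (-T) \<sigma>). \<forall>y\<in>B (\<theta> (-T) \<sigma>).
             norm (\<phi> T (\<theta> (-T) \<sigma>) x - \<phi> T (\<theta> (-T) \<sigma>) y) \<le> \<epsilon> + \<psi> x y"
  shows "pullback_asymptotically_compact \<theta> \<phi>"
  unfolding pullback_asymptotically_compact_def
proof (intro allI impI)
  fix \<sigma> and x :: "nat \<Rightarrow> 'x" and t :: "nat \<Rightarrow> real"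
  assume "bounded (range x)" and "\<forall>n. 0 \<le> t n" and "filterlim t at_top sequentially"
  show "compact (closure (range (\<lambda>n. \<phi> (t n) (\<theta> (- t n) \<sigma>) (x n))))"
  proof (rule compact_closure_range_if_tail_not_separated)
    fix e :: real
    assume "e > 0"
    then obtain T \<psi> where "0 \<le> T" and \<psi>: "\<psi> \<in> Contr (B (\<theta> (-T) \<sigma>))"
      and contraction: "\<forall>a\<in>B (\<theta> (-T) \<sigma>). \<forall>b\<in>B (\<theta> (-T) \<sigma>).
          dist (\<phi> T (\<theta> (-T) \<sigma>) a) (\<phi> T (\<theta> (-T) \<sigma>) b) \<le> e/2 + \<psi> a b"
      using assms(4) unfolding dist_norm by (meson half_gt_zero)
    have "eventually (\<lambda>n. \<phi> (t n) (\<theta> (- t n) \<sigma>) (x n) \<in> \<phi> T (\<theta> (-T) \<sigma>) ` B (\<theta> (-T) \<sigma>)) sequentially"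
      using eventually_pullback_in_image_of_absorbing[OF assms(1-3)] \<open>bounded (range x)\<close>
        \<open>filterlim t at_top sequentially\<close> \<open>0 \<le> T\<close> by blast
    from Contr_image_tail_not_separated[OF this \<psi> contraction] \<open>e > 0\<close>
    show "tail_not_separated (\<lambda>n. \<phi> (t n) (\<theta> (- t n) \<sigma>) (x n)) e"
      by simp
  qed
qed

end
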